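(* Let $n,b$ be integers with $1<n<b$, let $C$ be an $(n,b)$-permutiple class with graph $G_C$, and suppose that the state $n-1$ is a vertex of $\Gamma_C$. Then the symmetric closure $\widehat{C}$ of $C$ is a symmetric class. Moreover, the following are equivalent: (1) $C$ is a symmetric class; (2) $C=\widehat{C}$; (3) $\Gamma_C$ is a symmetric subgraph of the $(n,b)$-Hoey-Sloane graph (i.e. $\overline{\Gamma}_C=\Gamma_C$); (4) $G_C$ is a symmetric graph (i.e. $\overline{G}_C=G_C$).
   Context: For digits $0\le d_j<b$, $(d_k,\ldots,d_0)_b=\sum_j d_jb^j$ (leading zeros allowed). For a permutation $\sigma$ of $\{0,\ldots,k\}$, $(d_k,\ldots,d_0)_b$ is an $(n,b,\sigma)$-permutiple if $(d_k,\ldots,d_0)_b=n\cdot(d_{\sigma(k)},\ldots,d_{\sigma(0)})_b$; an $(n,b)$-permutiple if this holds for some $\sigma$. Its graph $G_p$ is the directed graph on vertex set $\{0,\ldots,b-1\}$ with edge set $\{(d_j,d_{\sigma(j)})\mid 0\le j\le k\}$. For a directed graph $G$ on $\{0,\ldots,b-1\}$ let $\mathrm{Cl}(G)$ be the set of all $(n,b)$-permutiples $q$ with $G_q$ a subgraph of $G$. The class of a permutiple $p$ is $C=\mathrm{Cl}(G_p)$, with graph $G_C=G_p$. For a digit $d$ put $\overline d=b-1-d$, for a state $c\in\{0,\dots,n-1\}$ put $\overline c=n-1-c$. The reflection $\overline G$ of a graph $G$ on $\{0,\ldots,b-1\}$ has edges $(\overline d_1,\overline d_2)$ for edges $(d_1,d_2)$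 of $G$. With $\lambda(x)$ the least non-negative residue mod $b$, the mother graph $M$ has vertex set $\{0,\ldots,b-1\}$ and edges the pairs $(d_1,d_2)$ with $\lambda(d_1+(b-n)d_2)\le n-1$. The Hoey-Sloane graph $\Gamma$ is the edge-labelled directed graph on states $\{0,\ldots,n-1\}$ where $(c_1,c_2)$ is an edge labelled by every edge $(d_1,d_2)$ of $M$ with $nd_2-d_1+c_1=bc_2$ (an edge exists iff such a label exists). The cycle image of a directed cycle $C_0$ of $M$ is the edge-labelled subgraph of $\Gamma$ with edges the $(c_1,c_2)$ for which $\{(d_1,d_2)\in C_0\mid nd_2-d_1+c_1=bc_2\}\neq\emptyset$, labelled by this set, and vertices their endpoints. $\Gamma_C$ is the union of the cycle images of the directed cycles contained in $G_C$. The reflection of an edge-labelled subgraph of $\Gamma$ replaces each vertex $c$ by $\overline c$, each edge $(c_1,c_2)$ by $(\overline c_1,\overline c_2)$, and each label $(d_1,d_2)$ by $(\overline d_1,\overline d_2)$. When $n-1$ is a vertex of $\Gamma_C$, there is an $(n,b)$-permutiple with graph $\overline{G}_C$, and the reflection of $C$ is the class $\overline{C}=\mathrm{Cl}(\overline{G}_C)$ (with graph $\overline{G}_C$); $C$ is a symmetric class if $C=\overline{C}$. The symmetric closure of $C$ is the permutiple class $\widehat{C}$ with graph $G_C\cup\overline{G}_C$, i.e. $\widehat C=\mathrm{Cl}(G_C\cup\overline{G}_C)$; it is a symmetric class if it equals its reflection, the class with graph $\overline{G_C\cup\overline{G}_C}$. *)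

theory Defs
  imports "HOL-Combinatorics.Permutations"
begin

text \<open>A digit tuple (d_k,...,d_0) is the list ds with ds!j = d_j, length k+1.
  Graphs on the digits {0..b-1} are edge sets of type (nat \<times> nat) set.\<close>

definition is_permutiple_wrt :: "nat \<Rightarrow> nat \<Rightarrow> nat list \<Rightarrow> (nat \<Rightarrow> nat) \<Rightarrow> bool" where
  "is_permutiple_wrt n b ds \<sigma> \<longleftrightarrow>
     ds \<noteq> [] \<and> (\<forall>j<length ds. ds ! j < b) \<and> \<sigma> permutes {..<length ds} \<and>
     (\<Sum>j<length ds. ds ! j * b ^ j) = n * (\<Sum>j<length ds. ds ! (\<sigma> j) * b ^ j)"

definition perm_graph :: "nat list \<Rightarrow> (nat \<Rightarrow> nat) \<Rightarrow> (nat \<times> nat) set" where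
  "perm_graph ds \<sigma> = {(ds ! j, ds ! (\<sigma> j)) | j. j < length ds}"

definition Cl :: "nat \<Rightarrow> nat \<Rightarrow> (nat \<times> nat) set \<Rightarrow> nat list set" where
  "Cl n b G = {ds. \<exists>\<sigma>. is_permutiple_wrt n b ds \<sigma> \<and> perm_graph ds \<sigma> \<subseteq> G}"

text \<open>G is the graph of some (n,b)-permutiple (so Cl(G) is a permutiple class with graph G).\<close>
definition is_class_graph :: "nat \<Rightarrow> nat \<Rightarrow> (nat \<times> nat) set \<Rightarrow> bool" where
  "is_class_graph n b G \<longleftrightarrow> (\<exists>ds \<sigma>. is_permutiple_wrt n b ds \<sigma> \<and> perm_graph ds \<sigma> = G)"

definition reflect_graph :: "nat \<Rightarrow> (nat \<times> nat) set \<Rightarrow> (nat \<times> nat) set" where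
  "reflect_graph b G = (\<lambda>(d1, d2). (b - 1 - d1, b - 1 - d2)) ` G"

definition dir_cycles :: "(nat \<times> nat) set \<Rightarrow> (nat \<times> nat) set set" where
  "dir_cycles G = {C0. \<exists>vs. vs \<noteq> [] \<and> distinct vs \<and>
      C0 = {(vs ! i, vs ! (Suc i mod length vs)) | i. i < length vs} \<and> C0 \<subseteq> G}"

text \<open>Edge-labelled subgraphs of the Hoey-Sloane graph are represented as sets of
  triples (c1, c2, (d1,d2)): edge (c1,c2) carrying label (d1,d2). Edges are the pairs
  (c1,c2) carrying at least one label, vertices are their endpoints.\<close>
definition cycle_image :: "nat \<Rightarrow> nat \<Rightarrow> (nat \<times> nat) set \<Rightarrow> (nat \<times> nat \<times> (nat \<times> nat)) set" where
  "cycle_image n b C0 = {(c1, c2, (d1, d2)) | c1 c2 d1 d2.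
      c1 < n \<and> c2 < n \<and> (d1, d2) \<in> C0 \<and> int n * int d2 - int d1 + int c1 = int b * int c2}"

definition Gamma_of :: "nat \<Rightarrow> nat \<Rightarrow> (nat \<times> nat) set \<Rightarrow> (nat \<times> nat \<times> (nat \<times> nat)) set" where
  "Gamma_of n b G = (\<Union>C0\<in>dir_cycles G. cycle_image n b C0)"

definition lgraph_vertices :: "(nat \<times> nat \<times> (nat \<times> nat)) set \<Rightarrow> nat set" where
  "lgraph_vertices L = {c. \<exists>c' l. (c, c', l) \<in> L \<or> (c', c, l) \<in> L}"

definition reflect_lgraph :: "nat \<Rightarrow> nat \<Rightarrow> (nat \<times> nat \<times> (nat \<times> nat)) set \<Rightarrow> (nat \<times> nat \<times> (nat \<times> nat)) set" where
  "reflect_lgraph n b L = (\<lambda>(c1, c2, (d1, d2)). (n - 1 - c1, n - 1 - c2, (b - 1 - d1, b - 1 - d2))) ` L"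

definition symmetric_class :: "nat \<Rightarrow> nat \<Rightarrow> (nat \<times> nat) set \<Rightarrow> bool" where
  "symmetric_class n b H \<longleftrightarrow> Cl n b H = Cl n b (reflect_graph b H)"

end

theory Submission
  imports Defs
begin

(* Read the permutiple p = n * sigma(p) from its least significant digit on. The carry left
   after t digits lies in {0..n-1}, and at position j it moves along the edge of the Hoey-Sloane
   graph labelled (d_j, d_sigma(j)); as every edge of G_C lies on a directed cycle of G_C, the
   labels of Gamma_C are exactly the edges of G_C. Complementing digits d -> b-1-d and carries
   c -> n-1-c preserves the transition equation, so Gamma of the reflected graph is the
   reflection of Gamma_C. If the carry n-1 occurs at position t, the complemented digit string
   rotated to start at t begins and ends with carry 0, hence is a permutiple with the reflected
   graph, and appending it to p gives a permutiple with graph G_C \<union> reflected G_C.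
   Finally, for n > 0 the digits of a permutiple determine its graph, so Cl(H) = Cl(K) iff H = K
   for class graphs H, K, and each of the conditions (1)-(4) reduces to G_C being symmetric. *)

section \<open>Digit strings\<close>

abbreviation digit_value :: "nat \<Rightarrow> nat list \<Rightarrow> int" where
  "digit_value b xs \<equiv> horner_sum int (int b) xs"

lemma digit_value_nonneg: "0 \<le> digit_value b xs"
  by (induction xs) simp_all

lemma digit_value_less:
  assumes "\<forall>x\<in>set xs. x < b"
  shows "digit_value b xs < int b ^ length xs"
  using assms
proof (induction xs)
  case (Cons x xs)
  then have "int x + int b * digit_value b xs \<le> int b - 1 + int b * (int b ^ length xs - 1)"
    by (intro add_mono mult_left_mono) auto
  then show ?case by (simp add: algebra_simps)
qed simp

lemma digit_value_inj:
  assumes "length xs = length ys" "\<forall>x\<in>set xs. x < b" "\<forall>y\<in>set ys. y < b"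
    and "digit_value b xs = digit_value b ys"
  shows "xs = ys"
  using assms
proof (induction xs arbitrary: ys)
  case (Cons x xs)
  then obtain y ys' where ys: "ys = y # ys'" by (cases ys) auto
  have "x < b" "y < b" using Cons.prems ys by auto
  moreover have eq: "int x + int b * digit_value b xs = int y + int b * digit_value b ys'"
    using Cons.prems ys by simp
  ultimately have "x = y"
    by (metis mod_mult_self2 mod_pos_pos_trivial of_nat_0_le_iff of_nat_eq_iff of_nat_less_iff)
  with eq \<open>x < b\<close> have "xs = ys'" using Cons ys by auto
  with \<open>x = y\<close> ys show ?case by simp
qed simp

lemma digit_value_take_drop:
  "digit_value b xs = digit_value b (take t xs) + int b ^ t * digit_value b (drop t xs)"
proof (cases "t \<le> length xs")
  case True
  then show ?thesis using horner_sum_append[of int "int b" "take t xs" "drop t xs"] by simp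
qed simp

definition compl_digit :: "nat \<Rightarrow> nat \<Rightarrow> nat" where
  "compl_digit b d = b - 1 - d"

lemma compl_digit_less: "0 < b \<Longrightarrow> compl_digit b d < b"
  unfolding compl_digit_def by simp

lemma compl_digit_compl_digit [simp]: "d < b \<Longrightarrow> compl_digit b (compl_digit b d) = d"
  unfolding compl_digit_def by simp

lemma compl_digit_inj_on: "inj_on (compl_digit b) {..<b}"
  by (rule inj_on_inverseI[where g = "compl_digit b"]) simp

lemma int_compl_digit: "d < b \<Longrightarrow> int (compl_digit b d) = int b - 1 - int d"
  unfolding compl_digit_def by simp

lemma digit_value_compl:
  assumes "\<forall>x\<in>set xs. x < b"
  shows "digit_value b (map (compl_digit b) xs) = int b ^ length xs - 1 - digit_value b xs"
  using assms
proof (induction xs)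
  case (Cons x xs)
  then show ?case by (simp add: int_compl_digit right_diff_distrib)
qed simp

section \<open>Permutiples as pairs of digit strings\<close>

definition permutiple_lists :: "nat \<Rightarrow> nat \<Rightarrow> nat list \<Rightarrow> nat list \<Rightarrow> bool" where
  "permutiple_lists n b xs ys \<longleftrightarrow>
     xs \<noteq> [] \<and> mset xs = mset ys \<and> (\<forall>x\<in>set xs. x < b) \<and>
     digit_value b xs = int n * digit_value b ys"

lemma permutiple_lists_digits_less:
  assumes "permutiple_lists n b xs ys"
  shows "\<forall>x\<in>set xs. x < b" "\<forall>y\<in>set ys. y < b"
  using assms unfolding permutiple_lists_def by (auto dest: mset_eq_setD)

lemma permutiple_lists_length:
  "permutiple_lists n b xs ys \<Longrightarrow> length ys = length xs"
  unfolding permutiple_lists_def by (metis size_mset)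

lemma permutiple_lists_base_pos: "permutiple_lists n b xs ys \<Longrightarrow> 0 < b"
  unfolding permutiple_lists_def by (cases xs) auto

lemma digit_value_eq_sum: "digit_value b xs = int (\<Sum>j<length xs. xs ! j * b ^ j)"
  by (simp add: horner_sum_eq_sum atLeast0LessThan)

lemma digit_value_permute_list:
  assumes "\<sigma> permutes {..<length ds}"
  shows "digit_value b (permute_list \<sigma> ds) = int (\<Sum>j<length ds. ds ! \<sigma> j * b ^ j)"
  unfolding digit_value_eq_sum length_permute_list
  by (intro arg_cong[where f = int] sum.cong) (simp_all add: permute_list_nth[OF assms])

lemma is_permutiple_wrt_iff:
  "is_permutiple_wrt n b ds \<sigma> \<longleftrightarrow>
     \<sigma> permutes {..<length ds} \<and> permutiple_lists n b ds (permute_list \<sigma> ds)"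
proof -
  have value_eq: "(\<Sum>j<length ds. ds ! j * b ^ j) = n * (\<Sum>j<length ds. ds ! (\<sigma> j) * b ^ j)
      \<longleftrightarrow> digit_value b ds = int n * digit_value b (permute_list \<sigma> ds)"
    if "\<sigma> permutes {..<length ds}"
    unfolding digit_value_permute_list[OF that] digit_value_eq_sum[of b ds]
    by (simp only: of_nat_mult[symmetric] of_nat_eq_iff)
  show ?thesis
  proof (cases "\<sigma> permutes {..<length ds}")
    case True
    then show ?thesis
      unfolding is_permutiple_wrt_def permutiple_lists_def all_set_conv_all_nth
      by (simp add: value_eq)
  qed (simp add: is_permutiple_wrt_def)
qed

lemma perm_graph_eq_set_zip:
  "\<sigma> permutes {..<length ds} \<Longrightarrow> perm_graph ds \<sigma> = set (zip ds (permute_list \<sigma> ds))"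
  unfolding perm_graph_def set_zip by (auto simp: permute_list_nth)

lemma permutiple_lists_class_graph:
  assumes "permutiple_lists n b xs ys"
  shows "is_class_graph n b (set (zip xs ys))"
proof -
  obtain \<sigma> where "\<sigma> permutes {..<length xs}" "permute_list \<sigma> xs = ys"
    using assms mset_eq_permutation unfolding permutiple_lists_def by metis
  then show ?thesis
    using assms unfolding is_class_graph_def is_permutiple_wrt_iff
    by (metis perm_graph_eq_set_zip)
qed

lemma permutiple_lists_append:
  assumes "permutiple_lists n b xs ys" "permutiple_lists n b xs' ys'"
  shows "permutiple_lists n b (xs @ xs') (ys @ ys')"
  using assms permutiple_lists_length[OF assms(1)]
  unfolding permutiple_lists_def by (auto simp: horner_sum_append algebra_simps)

lemma perm_graph_unique:
  assumes "is_permutiple_wrt n b ds \<sigma>" "is_permutiple_wrt n b ds \<tau>" "0 < n"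
  shows "perm_graph ds \<sigma> = perm_graph ds \<tau>"
proof -
  have \<sigma>: "\<sigma> permutes {..<length ds}" "permutiple_lists n b ds (permute_list \<sigma> ds)"
    and \<tau>: "\<tau> permutes {..<length ds}" "permutiple_lists n b ds (permute_list \<tau> ds)"
    using assms(1,2) unfolding is_permutiple_wrt_iff by auto
  have "digit_value b (permute_list \<sigma> ds) = digit_value b (permute_list \<tau> ds)"
    using \<sigma>(2) \<tau>(2) assms(3) unfolding permutiple_lists_def by auto
  then have "permute_list \<sigma> ds = permute_list \<tau> ds"
    using permutiple_lists_digits_less(2)[OF \<sigma>(2)] permutiple_lists_digits_less(2)[OF \<tau>(2)]
    by (intro digit_value_inj) auto
  then show ?thesis using \<sigma>(1) \<tau>(1) by (simp add: perm_graph_eq_set_zip)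
qed

lemma Cl_subset_iff:
  assumes "is_class_graph n b H" "0 < n"
  shows "Cl n b H \<subseteq> Cl n b K \<longleftrightarrow> H \<subseteq> K"
proof
  obtain ds \<sigma> where ds: "is_permutiple_wrt n b ds \<sigma>" "perm_graph ds \<sigma> = H"
    using assms(1) unfolding is_class_graph_def by blast
  assume "Cl n b H \<subseteq> Cl n b K"
  then have "ds \<in> Cl n b K" using ds unfolding Cl_def by blast
  then obtain \<tau> where "is_permutiple_wrt n b ds \<tau>" "perm_graph ds \<tau> \<subseteq> K"
    unfolding Cl_def by blast
  then show "H \<subseteq> K" using perm_graph_unique[OF ds(1) _ assms(2)] ds(2) by simp
qed (auto simp: Cl_def)

lemma Cl_eq_iff:
  assumes "is_class_graph n b H" "is_class_graph n b K" "0 < n"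
  shows "Cl n b H = Cl n b K \<longleftrightarrow> H = K"
  using Cl_subset_iff[OF assms(1,3)] Cl_subset_iff[OF assms(2,3)] by blast

section \<open>Carries\<close>

(* The carry out of the t least significant digits of n * ys, i.e. the state of the
   Hoey-Sloane graph at position t. *)
definition carry :: "nat \<Rightarrow> nat \<Rightarrow> nat list \<Rightarrow> nat list \<Rightarrow> nat \<Rightarrow> int" where
  "carry n b xs ys t = digit_value b (drop t xs) - int n * digit_value b (drop t ys)"

lemma carry_low_digits:
  assumes "digit_value b xs = int n * digit_value b ys"
  shows "int n * digit_value b (take t ys) - digit_value b (take t xs) = carry n b xs ys t * int b ^ t"
  using assms digit_value_take_drop[of b xs t] digit_value_take_drop[of b ys t]
  unfolding carry_def by (simp add: algebra_simps)

lemma carry_bounds: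
  assumes "permutiple_lists n b xs ys" "0 < n"
  shows "0 \<le> carry n b xs ys t" "carry n b xs ys t < int n"
proof -
  define Q where "Q = int b ^ t"
  have "0 < b" using permutiple_lists_base_pos[OF assms(1)] .
  have low_less: "digit_value b (take t zs) < Q" if "\<forall>z\<in>set zs. z < b" for zs
  proof -
    have "digit_value b (take t zs) < int b ^ length (take t zs)"
      using that by (intro digit_value_less) (auto dest: in_set_takeD)
    also have "\<dots> \<le> Q" unfolding Q_def using \<open>0 < b\<close> by (intro power_increasing) auto
    finally show ?thesis .
  qed
  note digits = permutiple_lists_digits_less[OF assms(1)]
  have Xt: "0 \<le> digit_value b (take t xs)" "digit_value b (take t xs) < Q"
    using digit_value_nonneg low_less[OF digits(1)] by auto
  have Yt: "0 \<le> digit_value b (take t ys)" "digit_value b (take t ys) < Q"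
    using digit_value_nonneg low_less[OF digits(2)] by auto
  have eq: "carry n b xs ys t * Q = int n * digit_value b (take t ys) - digit_value b (take t xs)"
    using carry_low_digits assms(1) unfolding permutiple_lists_def Q_def by auto
  have "0 < Q" unfolding Q_def using \<open>0 < b\<close> by simp
  have "0 \<le> int n * digit_value b (take t ys)" using Yt by simp
  then have "0 < (carry n b xs ys t + 1) * Q"
    using eq Xt by (simp add: algebra_simps)
  then show "0 \<le> carry n b xs ys t" using \<open>0 < Q\<close> by (simp add: zero_less_mult_iff)
  have "int n * digit_value b (take t ys) < int n * Q" using Yt \<open>0 < n\<close> by simp
  then have "carry n b xs ys t * Q < int n * Q" using eq Xt by linarith
  then show "carry n b xs ys t < int n" using \<open>0 < Q\<close> by simp
qed

lemma carry_step:
  assumes "t < length xs" "length ys = length xs"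
  shows "carry n b xs ys t + int n * int (ys ! t) - int (xs ! t) = int b * carry n b xs ys (Suc t)"
proof -
  have "drop t xs = xs ! t # drop (Suc t) xs" "drop t ys = ys ! t # drop (Suc t) ys"
    using assms by (simp_all add: Cons_nth_drop_Suc)
  then show ?thesis unfolding carry_def by (simp add: algebra_simps)
qed

lemma carry_transition_unique:
  fixes b c c' e e' :: int
  assumes "c - b * e = c' - b * e'" "0 \<le> c" "c < b" "0 \<le> c'" "c' < b"
  shows "c = c' \<and> e = e'"
proof -
  have "(c - b * e) mod b = c" "(c' - b * e') mod b = c'"
    using assms(2-5)
    by (metis diff_0_right mod_diff_right_eq mod_mult_self1_is_0 mod_pos_pos_trivial)+
  then have "c = c'" using assms(1) by simp
  then show ?thesis using assms(1-3) by simp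
qed

lemma carries_at_edge:
  assumes "permutiple_lists n b xs ys" "0 < n" "n < b"
    and "(d1, d2) \<in> set (zip xs ys)" "c1 < n" "c2 < n"
    and "int n * int d2 - int d1 + int c1 = int b * int c2"
  shows "\<exists>j<length xs. int c1 = carry n b xs ys j \<and> int c2 = carry n b xs ys (Suc j)"
proof -
  have len: "length ys = length xs" using permutiple_lists_length[OF assms(1)] .
  obtain j where j: "j < length xs" "d1 = xs ! j" "d2 = ys ! j"
    using assms(4) len by (auto simp: set_zip)
  have "carry n b xs ys j - int b * carry n b xs ys (Suc j) = int c1 - int b * int c2"
    using carry_step[OF j(1) len, where n = n and b = b] assms(7) j by simp
  then have "int c1 = carry n b xs ys j \<and> int c2 = carry n b xs ys (Suc j)"
    using carry_bounds[OF assms(1,2), of j] assms(3,5)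
    by (intro carry_transition_unique[of "int c1" "int b" "int c2"]) auto
  then show ?thesis using j(1) by blast
qed

lemma Gamma_of_memD:
  assumes "(c1, c2, (d1, d2)) \<in> Gamma_of n b G"
  shows "c1 < n" "c2 < n" "(d1, d2) \<in> G" "int n * int d2 - int d1 + int c1 = int b * int c2"
  using assms unfolding Gamma_of_def cycle_image_def dir_cycles_def by blast+

lemma carry_n_minus_1_if_vertex:
  assumes "is_permutiple_wrt n b ds \<sigma>" "0 < n" "n < b"
    and "n - 1 \<in> lgraph_vertices (Gamma_of n b (perm_graph ds \<sigma>))"
  shows "\<exists>t\<le>length ds. carry n b ds (permute_list \<sigma> ds) t = int n - 1"
proof -
  define ys where "ys = permute_list \<sigma> ds"
  have perm: "\<sigma> permutes {..<length ds}" "permutiple_lists n b ds ys"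
    using assms(1) unfolding is_permutiple_wrt_iff ys_def by auto
  obtain c1 c2 d1 d2 where edge: "(c1, c2, (d1, d2)) \<in> Gamma_of n b (perm_graph ds \<sigma>)"
    and c: "c1 = n - 1 \<or> c2 = n - 1"
    using assms(4) unfolding lgraph_vertices_def by auto
  obtain j where j: "j < length ds"
    "int c1 = carry n b ds ys j" "int c2 = carry n b ds ys (Suc j)"
    using carries_at_edge[OF perm(2) assms(2,3)] Gamma_of_memD[OF edge]
    unfolding perm_graph_eq_set_zip[OF perm(1)] ys_def by blast
  have "int (n - 1) = int n - 1" using assms(2) by simp
  with c j show ?thesis unfolding ys_def by (metis Suc_leI less_imp_le)
qed

section \<open>Reflection\<close>

definition reflected_rotation :: "nat \<Rightarrow> nat \<Rightarrow> nat list \<Rightarrow> nat list" where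
  "reflected_rotation b t xs = drop t (map (compl_digit b) xs) @ take t (map (compl_digit b) xs)"

lemma digit_value_reflected_rotation:
  assumes "\<forall>x\<in>set xs. x < b" "t \<le> length xs"
  shows "digit_value b (reflected_rotation b t xs) =
    (int b ^ (length xs - t) - 1 - digit_value b (drop t xs)) +
    int b ^ (length xs - t) * (int b ^ t - 1 - digit_value b (take t xs))"
proof -
  have "\<forall>x\<in>set (drop t xs). x < b" "\<forall>x\<in>set (take t xs). x < b"
    using assms(1) by (auto dest: in_set_dropD in_set_takeD)
  then show ?thesis
    using assms(2) unfolding reflected_rotation_def
    by (simp add: horner_sum_append drop_map take_map digit_value_compl min_absorb2)
qed

lemma length_reflected_rotation: "length (reflected_rotation b t xs) = length xs"
  unfolding reflected_rotation_def by simp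

lemma mset_reflected_rotation:
  "mset (reflected_rotation b t xs) = image_mset (compl_digit b) (mset xs)"
  unfolding reflected_rotation_def
  by (metis mset_append mset_map append_take_drop_id union_commute)

lemma set_reflected_rotation_less:
  "0 < b \<Longrightarrow> x \<in> set (reflected_rotation b t xs) \<Longrightarrow> x < b"
  unfolding reflected_rotation_def by (auto dest!: in_set_dropD in_set_takeD simp: compl_digit_less)

lemma set_zip_reflected_rotation:
  assumes "length xs = length ys"
  shows "set (zip (reflected_rotation b t xs) (reflected_rotation b t ys)) =
    reflect_graph b (set (zip xs ys))"
proof -
  let ?zs = "zip (map (compl_digit b) xs) (map (compl_digit b) ys)"
  have "zip (reflected_rotation b t xs) (reflected_rotation b t ys) = drop t ?zs @ take t ?zs"
    unfolding reflected_rotation_def using assms by (simp add: drop_zip take_zip)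
  then have "set (zip (reflected_rotation b t xs) (reflected_rotation b t ys)) = set ?zs"
    by (metis set_append append_take_drop_id sup_commute)
  then show ?thesis unfolding reflect_graph_def zip_map_map compl_digit_def by auto
qed

lemma permutiple_lists_reflected_rotation:
  assumes "permutiple_lists n b xs ys" "t \<le> length xs" "carry n b xs ys t = int n - 1"
  shows "permutiple_lists n b (reflected_rotation b t xs) (reflected_rotation b t ys)"
proof -
  have len: "length ys = length xs" using permutiple_lists_length[OF assms(1)] .
  note digits = permutiple_lists_digits_less[OF assms(1)]
  have "0 < b" using permutiple_lists_base_pos[OF assms(1)] .
  define P where "P = int b ^ (length xs - t)"
  define Q where "Q = int b ^ t"
  have high: "digit_value b (drop t xs) = int n * digit_value b (drop t ys) + (int n - 1)"
    using assms(3) unfolding carry_def by simp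
  have low: "digit_value b (take t xs) = int n * digit_value b (take t ys) - (int n - 1) * Q"
    using carry_low_digits[of b xs n ys t] assms(1,3) unfolding permutiple_lists_def Q_def
    by (simp add: algebra_simps)
  have "digit_value b (reflected_rotation b t xs)
      = (P - 1 - digit_value b (drop t xs)) + P * (Q - 1 - digit_value b (take t xs))"
    using digit_value_reflected_rotation[OF digits(1) assms(2)] unfolding P_def Q_def .
  also have "\<dots> = int n * ((P - 1 - digit_value b (drop t ys)) + P * (Q - 1 - digit_value b (take t ys)))"
    unfolding high low by (simp add: algebra_simps)
  also have "\<dots> = int n * digit_value b (reflected_rotation b t ys)"
    using digit_value_reflected_rotation[OF digits(2)] assms(2) len unfolding P_def Q_def by simp
  finally have "digit_value b (reflected_rotation b t xs) =
      int n * digit_value b (reflected_rotation b t ys)" .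
  moreover have "mset (reflected_rotation b t xs) = mset (reflected_rotation b t ys)"
    using assms(1) unfolding permutiple_lists_def mset_reflected_rotation by simp
  moreover have "reflected_rotation b t xs \<noteq> []"
    using assms(1) length_reflected_rotation[of b t xs] unfolding permutiple_lists_def
    by (metis length_0_conv)
  ultimately show ?thesis
    using set_reflected_rotation_less[OF \<open>0 < b\<close>] unfolding permutiple_lists_def by blast
qed

lemma reflect_graph_eq_image:
  "reflect_graph b H = map_prod (compl_digit b) (compl_digit b) ` H"
  unfolding reflect_graph_def compl_digit_def by (auto simp: map_prod_def)

lemma reflect_graph_reflect_graph:
  assumes "H \<subseteq> {..<b} \<times> {..<b}"
  shows "reflect_graph b (reflect_graph b H) = H"
proof -
  let ?r = "map_prod (compl_digit b) (compl_digit b)"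
  have "(\<lambda>p. ?r (?r p)) ` H = id ` H"
    using assms by (intro image_cong) (auto simp: map_prod_def split: prod.splits)
  then show ?thesis by (simp add: reflect_graph_eq_image image_image)
qed

lemma reflect_graph_subset_digits:
  "H \<subseteq> {..<b} \<times> {..<b} \<Longrightarrow> reflect_graph b H \<subseteq> {..<b} \<times> {..<b}"
  unfolding reflect_graph_eq_image compl_digit_def by force

lemma reflect_graph_subset_iff_eq:
  assumes "H \<subseteq> {..<b} \<times> {..<b}"
  shows "reflect_graph b H \<subseteq> H \<longleftrightarrow> reflect_graph b H = H"
proof
  assume "reflect_graph b H \<subseteq> H"
  then have "reflect_graph b (reflect_graph b H) \<subseteq> reflect_graph b H"
    unfolding reflect_graph_def by (rule image_mono)
  then show "reflect_graph b H = H"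
    using \<open>reflect_graph b H \<subseteq> H\<close> reflect_graph_reflect_graph[OF assms] by blast
qed simp

lemma reflect_graph_Un: "reflect_graph b (G \<union> H) = reflect_graph b G \<union> reflect_graph b H"
  unfolding reflect_graph_def by (rule image_Un)

lemma perm_graph_subset_digits:
  "is_permutiple_wrt n b ds \<sigma> \<Longrightarrow> perm_graph ds \<sigma> \<subseteq> {..<b} \<times> {..<b}"
  unfolding is_permutiple_wrt_def perm_graph_def
  by (auto dest: permutes_in_image)

lemma is_class_graph_reflection:
  assumes "is_permutiple_wrt n b ds \<sigma>" "0 < n" "n < b"
    and "n - 1 \<in> lgraph_vertices (Gamma_of n b (perm_graph ds \<sigma>))"
  defines "G \<equiv> perm_graph ds \<sigma>"
  shows "is_class_graph n b (reflect_graph b G)" "is_class_graph n b (G \<union> reflect_graph b G)"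
proof -
  define ys where "ys = permute_list \<sigma> ds"
  have perm: "\<sigma> permutes {..<length ds}" "permutiple_lists n b ds ys"
    using assms(1) unfolding is_permutiple_wrt_iff ys_def by auto
  have G: "G = set (zip ds ys)" unfolding G_def ys_def by (rule perm_graph_eq_set_zip[OF perm(1)])
  obtain t where "t \<le> length ds" "carry n b ds ys t = int n - 1"
    using carry_n_minus_1_if_vertex[OF assms(1-4)] unfolding ys_def by blast
  then have refl: "permutiple_lists n b (reflected_rotation b t ds) (reflected_rotation b t ys)"
    by (rule permutiple_lists_reflected_rotation[OF perm(2)])
  have "set (zip (reflected_rotation b t ds) (reflected_rotation b t ys)) = reflect_graph b G"
    unfolding G using permutiple_lists_length[OF perm(2)]
    by (intro set_zip_reflected_rotation) simp
  then show "is_class_graph n b (reflect_graph b G)"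
    using permutiple_lists_class_graph[OF refl] by simp
  have "set (zip (ds @ reflected_rotation b t ds) (ys @ reflected_rotation b t ys)) =
      G \<union> reflect_graph b G"
    using \<open>set (zip _ _) = reflect_graph b G\<close> permutiple_lists_length[OF perm(2)] G by simp
  then show "is_class_graph n b (G \<union> reflect_graph b G)"
    using permutiple_lists_class_graph[OF permutiple_lists_append[OF perm(2) refl]] by simp
qed

section \<open>Directed cycles and the Hoey-Sloane subgraph\<close>

lemma successively_distinct_subwalk:
  assumes "successively R p" "p \<noteq> []"
  shows "\<exists>q. successively R q \<and> distinct q \<and> q \<noteq> [] \<and> hd q = hd p \<and> last q = last p"
  using assms
proof (induction "length p" arbitrary: p rule: less_induct)
  case less
  show ?case
  proof (cases "distinct p")
    case False
    then obtain as y bs cs where p: "p = as @ [y] @ bs @ [y] @ cs"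
      using not_distinct_decomp by blast
    define p' where "p' = as @ y # cs"
    have "successively R p'"
      using less.prems(1) unfolding p p'_def
      by (auto simp: successively_append_iff successively_Cons)
    moreover have "length p' < length p" "p' \<noteq> []" unfolding p p'_def by simp_all
    ultimately obtain q where "successively R q" "distinct q" "q \<noteq> []"
      "hd q = hd p'" "last q = last p'"
      using less.hyps by blast
    moreover have "hd p' = hd p" "last p' = last p"
      unfolding p p'_def by (cases as; simp) (cases cs; simp)
    ultimately show ?thesis by auto
  qed (use less.prems in blast)
qed

lemma dir_cycle_of_closed_walk:
  assumes "successively (\<lambda>x y. (x, y) \<in> G) (w # q)" "distinct q" "q \<noteq> []" "last q = w"
  shows "\<exists>C0\<in>dir_cycles G. (w, hd q) \<in> C0"
proof -
  define vs where "vs = w # butlast q"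
  have walk: "vs @ [w] = w # q" unfolding vs_def using assms(3,4)
    by (metis append_Cons append_butlast_last_id)
  have "length vs = length q" unfolding vs_def using assms(3) by simp
  have succ: "vs ! (Suc i mod length vs) = (w # q) ! Suc i" if "i < length vs" for i
  proof (cases "Suc i < length vs")
    case True
    then show ?thesis by (simp flip: walk add: nth_append)
  next
    case False
    with that have "Suc i = length vs" by simp
    moreover from this have "(w # q) ! Suc i = w" by (metis walk nth_append_length)
    ultimately show ?thesis by (simp add: vs_def)
  qed
  have "q = butlast q @ [w]" using assms(3,4) by (metis append_butlast_last_id)
  then have "distinct (butlast q @ [w])" using assms(2) by simp
  then have "distinct vs" unfolding vs_def by auto
  moreover have "{(vs ! i, vs ! (Suc i mod length vs)) | i. i < length vs} \<subseteq> G"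
  proof safe
    fix i assume "i < length vs"
    then have "((w # q) ! i, (w # q) ! Suc i) \<in> G"
      using successively_nth[OF assms(1), of i] \<open>length vs = length q\<close> by simp
    then show "(vs ! i, vs ! (Suc i mod length vs)) \<in> G"
      using succ[OF \<open>i < length vs\<close>] \<open>i < length vs\<close> by (simp flip: walk add: nth_append)
  qed
  ultimately have "{(vs ! i, vs ! (Suc i mod length vs)) | i. i < length vs} \<in> dir_cycles G"
    unfolding dir_cycles_def by (intro CollectI exI[of _ vs]) (simp add: vs_def)
  moreover have "(w, hd q) \<in> {(vs ! i, vs ! (Suc i mod length vs)) | i. i < length vs}"
    using succ[of 0] assms(3) by (auto simp: vs_def hd_conv_nth intro!: exI[of _ 0])
  ultimately show ?thesis by (rule bexI[rotated])
qed

lemma perm_graph_edge_in_dir_cycle: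
  assumes "\<sigma> permutes {..<length xs}" "j < length xs"
  shows "\<exists>C0\<in>dir_cycles (perm_graph xs \<sigma>). (xs ! j, xs ! \<sigma> j) \<in> C0"
proof -
  let ?G = "perm_graph xs \<sigma>"
  have "permutation \<sigma>" using assms(1) permutation_permutes by blast
  then obtain m where "0 < m" "(\<sigma> ^^ m) j = j" by (rule permutation_self)
  define p where "p = map (\<lambda>i. xs ! (\<sigma> ^^ Suc i) j) [0..<m]"
  have in_range: "(\<sigma> ^^ k) j < length xs" for k
    using permutes_in_funpow_image[OF assms(1)] assms(2) by auto
  have "successively (\<lambda>x y. (x, y) \<in> ?G) p"
    unfolding successively_conv_nth
  proof (intro allI impI)
    fix i assume "Suc i < length p"
    then have "p ! i = xs ! (\<sigma> ^^ Suc i) j" "p ! Suc i = xs ! (\<sigma> ^^ Suc (Suc i)) j"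
      unfolding p_def by (simp_all del: funpow.simps)
    moreover have "(\<sigma> ^^ Suc (Suc i)) j = \<sigma> ((\<sigma> ^^ Suc i) j)" by simp
    ultimately
    show "(p ! i, p ! Suc i) \<in> ?G"
      using in_range[of "Suc i"] unfolding perm_graph_def by auto
  qed
  moreover have "p \<noteq> []" using \<open>0 < m\<close> by (simp add: p_def)
  ultimately obtain q where q: "successively (\<lambda>x y. (x, y) \<in> ?G) q" "distinct q" "q \<noteq> []"
    "hd q = hd p" "last q = last p"
    using successively_distinct_subwalk by blast
  have "hd p = xs ! \<sigma> j" using \<open>0 < m\<close> by (simp add: p_def hd_map)
  moreover have "last p = xs ! j"
    using \<open>0 < m\<close> \<open>(\<sigma> ^^ m) j = j\<close> by (simp add: p_def last_map del: funpow.simps)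
  moreover have "(xs ! j, xs ! \<sigma> j) \<in> ?G" using assms(2) unfolding perm_graph_def by blast
  ultimately have "successively (\<lambda>x y. (x, y) \<in> ?G) (xs ! j # q)"
    using q by (simp add: successively_Cons)
  from dir_cycle_of_closed_walk[OF this q(2,3)] show ?thesis
    using q(4,5) \<open>hd p = xs ! \<sigma> j\<close> \<open>last p = xs ! j\<close> by simp
qed

lemma reflect_graph_dir_cycle:
  assumes "C0 \<in> dir_cycles G" "G \<subseteq> {..<b} \<times> {..<b}"
  shows "reflect_graph b C0 \<in> dir_cycles (reflect_graph b G)"
proof -
  obtain vs where vs: "vs \<noteq> []" "distinct vs" "C0 \<subseteq> G"
    and C0: "C0 = {(vs ! i, vs ! (Suc i mod length vs)) | i. i < length vs}"
    using assms(1) unfolding dir_cycles_def by blast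
  have "set vs \<subseteq> {..<b}"
  proof
    fix v assume "v \<in> set vs"
    then obtain i where "i < length vs" "v = vs ! i" by (metis in_set_conv_nth)
    then have "(v, vs ! (Suc i mod length vs)) \<in> G" using vs(3) C0 by blast
    then show "v \<in> {..<b}" using assms(2) by blast
  qed
  then have "distinct (map (compl_digit b) vs)"
    using vs(2) inj_on_subset[OF compl_digit_inj_on] by (simp add: distinct_map)
  moreover have "reflect_graph b C0 =
      {(map (compl_digit b) vs ! i, map (compl_digit b) vs ! (Suc i mod length vs)) | i. i < length vs}"
  proof -
    have C0_image: "C0 = (\<lambda>i. (vs ! i, vs ! (Suc i mod length vs))) ` {..<length vs}"
      unfolding C0 by blast
    have "reflect_graph b C0 =
        (\<lambda>i. (map (compl_digit b) vs ! i, map (compl_digit b) vs ! (Suc i mod length vs))) `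
          {..<length vs}"
      unfolding reflect_graph_eq_image C0_image image_image using vs(1) by (intro image_cong) auto
    then show ?thesis by blast
  qed
  moreover have "reflect_graph b C0 \<subseteq> reflect_graph b G"
    unfolding reflect_graph_def using vs(3) by (rule image_mono)
  ultimately show ?thesis
    unfolding dir_cycles_def using vs(1) by (intro CollectI exI[of _ "map (compl_digit b) vs"]) simp
qed

lemma reflect_lgraph_eq_image:
  "reflect_lgraph n b L =
     map_prod (compl_digit n) (map_prod (compl_digit n) (map_prod (compl_digit b) (compl_digit b))) ` L"
  unfolding reflect_lgraph_def compl_digit_def by (intro image_cong) auto

lemma reflect_lgraph_reflect_lgraph:
  assumes "L \<subseteq> {..<n} \<times> {..<n} \<times> ({..<b} \<times> {..<b})"
  shows "reflect_lgraph n b (reflect_lgraph n b L) = L"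
proof -
  let ?r = "map_prod (compl_digit n) (map_prod (compl_digit n) (map_prod (compl_digit b) (compl_digit b)))"
  have "(\<lambda>x. ?r (?r x)) ` L = id ` L"
    using assms by (intro image_cong) (auto simp: map_prod_def split: prod.splits)
  then show ?thesis by (simp add: reflect_lgraph_eq_image image_image)
qed

lemma Gamma_of_subset: "Gamma_of n b G \<subseteq> {..<n} \<times> {..<n} \<times> G"
  using Gamma_of_memD by fast

lemma reflect_lgraph_Gamma_of_subset:
  assumes "G \<subseteq> {..<b} \<times> {..<b}" "0 < n"
  shows "reflect_lgraph n b (Gamma_of n b G) \<subseteq> Gamma_of n b (reflect_graph b G)"
proof
  fix x assume "x \<in> reflect_lgraph n b (Gamma_of n b G)"
  then obtain c1 c2 d1 d2 where x: "x = (n - 1 - c1, n - 1 - c2, (b - 1 - d1, b - 1 - d2))"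
    and edge: "(c1, c2, (d1, d2)) \<in> Gamma_of n b G"
    unfolding reflect_lgraph_def by auto
  then obtain C0 where C0: "C0 \<in> dir_cycles G" "(d1, d2) \<in> C0"
    unfolding Gamma_of_def cycle_image_def by blast
  note c = Gamma_of_memD[OF edge]
  have "d1 < b" "d2 < b" using C0 assms(1) unfolding dir_cycles_def by blast+
  then have "int n * int (b - 1 - d2) - int (b - 1 - d1) + int (n - 1 - c1) = int b * int (n - 1 - c2)"
    using c(1,2,4) by (simp add: algebra_simps)
  moreover have "(b - 1 - d1, b - 1 - d2) \<in> reflect_graph b C0"
    using C0(2) unfolding reflect_graph_def by force
  ultimately have "x \<in> cycle_image n b (reflect_graph b C0)"
    unfolding x cycle_image_def using assms(2) by auto
  then show "x \<in> Gamma_of n b (reflect_graph b G)"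
    unfolding Gamma_of_def using reflect_graph_dir_cycle[OF C0(1) assms(1)] by blast
qed

lemma reflect_lgraph_Gamma_of:
  assumes "G \<subseteq> {..<b} \<times> {..<b}" "0 < n"
  shows "reflect_lgraph n b (Gamma_of n b G) = Gamma_of n b (reflect_graph b G)"
proof
  show "reflect_lgraph n b (Gamma_of n b G) \<subseteq> Gamma_of n b (reflect_graph b G)"
    using reflect_lgraph_Gamma_of_subset[OF assms] .
  have digits: "reflect_graph b G \<subseteq> {..<b} \<times> {..<b}"
    using reflect_graph_subset_digits[OF assms(1)] .
  have "Gamma_of n b (reflect_graph b G) =
      reflect_lgraph n b (reflect_lgraph n b (Gamma_of n b (reflect_graph b G)))"
    using Gamma_of_subset digits by (intro reflect_lgraph_reflect_lgraph[symmetric]) blast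
  also have "\<dots> \<subseteq> reflect_lgraph n b (Gamma_of n b G)"
    using reflect_lgraph_Gamma_of_subset[OF digits assms(2)]
    unfolding reflect_graph_reflect_graph[OF assms(1)] reflect_lgraph_def by (rule image_mono)
  finally show "Gamma_of n b (reflect_graph b G) \<subseteq> reflect_lgraph n b (Gamma_of n b G)" .
qed

definition lgraph_labels :: "(nat \<times> nat \<times> (nat \<times> nat)) set \<Rightarrow> (nat \<times> nat) set" where
  "lgraph_labels L = {l. \<exists>c1 c2. (c1, c2, l) \<in> L}"

lemma lgraph_labels_reflect_lgraph:
  "lgraph_labels (reflect_lgraph n b L) = reflect_graph b (lgraph_labels L)"
  unfolding lgraph_labels_def reflect_lgraph_def reflect_graph_def by force

lemma lgraph_labels_Gamma_of:
  assumes "is_class_graph n b G" "0 < n"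
  shows "lgraph_labels (Gamma_of n b G) = G"
proof
  show "lgraph_labels (Gamma_of n b G) \<subseteq> G"
    unfolding lgraph_labels_def using Gamma_of_memD(3) by fast
  obtain ds \<sigma> where ds: "is_permutiple_wrt n b ds \<sigma>" and G: "G = perm_graph ds \<sigma>"
    using assms(1) unfolding is_class_graph_def by blast
  define ys where "ys = permute_list \<sigma> ds"
  have perm: "\<sigma> permutes {..<length ds}" "permutiple_lists n b ds ys"
    using ds unfolding is_permutiple_wrt_iff ys_def by auto
  show "G \<subseteq> lgraph_labels (Gamma_of n b G)"
  proof
    fix e assume "e \<in> G"
    then obtain j where j: "j < length ds" "e = (ds ! j, ds ! \<sigma> j)"
      unfolding G perm_graph_def by blast
    obtain C0 where C0: "C0 \<in> dir_cycles G" "e \<in> C0"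
      using perm_graph_edge_in_dir_cycle[OF perm(1) j(1)] unfolding G j(2) by blast
    let ?c1 = "carry n b ds ys j" and ?c2 = "carry n b ds ys (Suc j)"
    have "?c1 + int n * int (ds ! \<sigma> j) - int (ds ! j) = int b * ?c2"
      using carry_step[OF j(1) permutiple_lists_length[OF perm(2)]] j(1) perm(1)
      unfolding ys_def by (simp add: permute_list_nth)
    moreover have "0 \<le> ?c1" "?c1 < int n" "0 \<le> ?c2" "?c2 < int n"
      using carry_bounds[OF perm(2) assms(2)] by auto
    ultimately have "(nat ?c1, nat ?c2, e) \<in> cycle_image n b C0"
      unfolding cycle_image_def j(2) using C0(2) j(2) by auto
    then show "e \<in> lgraph_labels (Gamma_of n b G)"
      unfolding lgraph_labels_def Gamma_of_def using C0(1) by blast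
  qed
qed

lemma reflect_lgraph_Gamma_of_eq_iff:
  assumes "is_class_graph n b G" "0 < n"
  shows "reflect_lgraph n b (Gamma_of n b G) = Gamma_of n b G \<longleftrightarrow> reflect_graph b G = G"
proof
  assume "reflect_lgraph n b (Gamma_of n b G) = Gamma_of n b G"
  then have "lgraph_labels (reflect_lgraph n b (Gamma_of n b G)) = lgraph_labels (Gamma_of n b G)"
    by simp
  then show "reflect_graph b G = G"
    unfolding lgraph_labels_reflect_lgraph lgraph_labels_Gamma_of[OF assms] .
next
  have "G \<subseteq> {..<b} \<times> {..<b}"
    using assms(1) perm_graph_subset_digits unfolding is_class_graph_def by blast
  moreover assume "reflect_graph b G = G"
  ultimately show "reflect_lgraph n b (Gamma_of n b G) = Gamma_of n b G"
    using reflect_lgraph_Gamma_of[OF _ assms(2)] by metis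
qed

theorem theorem18:
  fixes n b :: nat and ds :: "nat list" and \<sigma> :: "nat \<Rightarrow> nat" and G :: "(nat \<times> nat) set"
  assumes "1 < n" and "n < b"
    and "is_permutiple_wrt n b ds \<sigma>"
    and "G = perm_graph ds \<sigma>"
    and "n - 1 \<in> lgraph_vertices (Gamma_of n b G)"
  shows "is_class_graph n b (G \<union> reflect_graph b G)
         \<and> symmetric_class n b (G \<union> reflect_graph b G)
         \<and> (symmetric_class n b G \<longleftrightarrow> Cl n b G = Cl n b (G \<union> reflect_graph b G))
         \<and> (Cl n b G = Cl n b (G \<union> reflect_graph b G) \<longleftrightarrow>
              reflect_lgraph n b (Gamma_of n b G) = Gamma_of n b G)
         \<and> (reflect_lgraph n b (Gamma_of n b G) = Gamma_of n b G \<longleftrightarrow>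
              reflect_graph b G = G)"
proof -
  have "0 < n" using assms(1) by simp
  have digits: "G \<subseteq> {..<b} \<times> {..<b}"
    using perm_graph_subset_digits[OF assms(3)] assms(4) by simp
  have G: "is_class_graph n b G"
    using assms(3,4) unfolding is_class_graph_def by blast
  have R: "is_class_graph n b (reflect_graph b G)"
    and U: "is_class_graph n b (G \<union> reflect_graph b G)"
    using is_class_graph_reflection[OF assms(3) \<open>0 < n\<close> assms(2)] assms(4,5) by simp_all
  have "reflect_graph b (G \<union> reflect_graph b G) = G \<union> reflect_graph b G"
    unfolding reflect_graph_Un reflect_graph_reflect_graph[OF digits] by blast
  then have "symmetric_class n b (G \<union> reflect_graph b G)"
    unfolding symmetric_class_def by simp
  moreover have "symmetric_class n b G \<longleftrightarrow> reflect_graph b G = G"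
    unfolding symmetric_class_def Cl_eq_iff[OF G R \<open>0 < n\<close>] by auto
  moreover have "Cl n b G = Cl n b (G \<union> reflect_graph b G) \<longleftrightarrow> reflect_graph b G = G"
    unfolding Cl_eq_iff[OF G U \<open>0 < n\<close>] reflect_graph_subset_iff_eq[OF digits, symmetric] by blast
  ultimately show ?thesis
    using U reflect_lgraph_Gamma_of_eq_iff[OF G \<open>0 < n\<close>] by blast
qed

end
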